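(* For every $k\ge 0$, the complete graph $K_{3k+4}$ is a semi-arc $k$-visibility graph.
   Context: A semi-arc $k$-visibility representation is a finite collection of pairwise disjoint circular arcs centered at a common point $O$, all starting on one common radial ray from $O$ and extending counterclockwise from it. A line of sight is a segment contained in a line through $O$ (it may pass through $O$) with endpoints on two arcs and intersecting at most $k$ other arcs (an arc met twice by the radial line is counted once). The semi-arc $k$-visibility graph has one vertex per arc, two vertices being adjacent when their arcs are joined by a line of sight. *)

theory Defs
  imports "HOL-Analysis.Analysis"
begin

text \<open>The plane is the complex plane, the common centre O is the origin 0.
  An arc with start angle alpha (the common radial ray), radius r and angular
  extent theta is the closed set of points r * cis phi, alpha <= phi <= alpha + theta,
  i.e. it starts on the ray of angle alpha and extends counterclockwise.\<close>

definition sarc :: "real \<Rightarrow> real \<Rightarrow> real \<Rightarrow> complex set" where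
  "sarc alpha r theta = {complex_of_real r * cis phi | phi. alpha \<le> phi \<and> phi \<le> alpha + theta}"

definition semi_arc_rep :: "real \<Rightarrow> ('v \<Rightarrow> real) \<Rightarrow> ('v \<Rightarrow> real) \<Rightarrow> 'v set \<Rightarrow> bool" where
  "semi_arc_rep alpha r theta V \<longleftrightarrow>
     finite V \<and>
     (\<forall>v\<in>V. 0 < r v \<and> 0 < theta v \<and> theta v < 2 * pi) \<and>
     (\<forall>u\<in>V. \<forall>v\<in>V. u \<noteq> v \<longrightarrow> sarc alpha (r u) (theta u) \<inter> sarc alpha (r v) (theta v) = {})"

definition line_of_sight :: "nat \<Rightarrow> real \<Rightarrow> ('v \<Rightarrow> real) \<Rightarrow> ('v \<Rightarrow> real) \<Rightarrow> 'v set \<Rightarrow> 'v \<Rightarrow> 'v \<Rightarrow> bool" where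
  "line_of_sight k alpha r theta V a b \<longleftrightarrow>
     (\<exists>p q. p \<in> sarc alpha (r a) (theta a) \<and> q \<in> sarc alpha (r b) (theta b) \<and>
        collinear {0, p, q} \<and>
        card {c \<in> V - {a, b}. closed_segment p q \<inter> sarc alpha (r c) (theta c) \<noteq> {}} \<le> k)"

definition semi_arc_k_visibility_graph :: "nat \<Rightarrow> 'v set \<Rightarrow> ('v \<Rightarrow> 'v \<Rightarrow> bool) \<Rightarrow> bool" where
  "semi_arc_k_visibility_graph k V E \<longleftrightarrow>
     (\<exists>alpha r theta. semi_arc_rep alpha r theta V \<and>
        (\<forall>a\<in>V. \<forall>b\<in>V. a \<noteq> b \<longrightarrow> (E a b \<longleftrightarrow> line_of_sight k alpha r theta V a b)))"

end

theory Submission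
  imports Defs
begin

text \<open>Take arcs of radii 1, ..., 3k+4 starting on the positive real axis, with extents
  increasing with the radius: k+2 arcs shorter than a quarter turn, then k+1 arcs slightly
  longer than a half turn, then k+1 arcs longer than five eighths of a turn. Two arcs whose
  indices differ by at most k+1 see each other along the ray at the end of the shorter one,
  which meets only the arcs of intermediate radius. Any other pair sees each other along a
  diameter, from angle phi on the inner arc to phi + pi on the outer one. Such a diameter
  meets exactly the arcs that reach phi inside the inner radius or phi + pi inside the outer
  radius, and by the choice of the three groups of extents these are at most k consecutive
  arcs once phi is as large as the two arcs allow.\<close>

lemma norm_mem_sarc: "z \<in> sarc alpha r theta \<Longrightarrow> norm z = \<bar>r\<bar>"
  unfolding sarc_def by (auto simp: norm_mult)

lemma sarc_disjoint_radii:
  assumes "0 < r" "0 < r'" "r \<noteq> r'"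
  shows "sarc alpha r theta \<inter> sarc alpha' r' theta' = {}"
  using assms norm_mem_sarc[of _ alpha r theta] norm_mem_sarc[of _ alpha' r' theta'] by force

lemma cis_mem_sarc: "0 \<le> phi \<Longrightarrow> phi \<le> theta \<Longrightarrow> complex_of_real r * cis phi \<in> sarc 0 r theta"
  unfolding sarc_def by auto

lemma polar_mem_sarc:
  assumes "complex_of_real s * cis psi \<in> sarc 0 r theta" "0 < r" "theta < 2*pi"
    "0 < s" "0 \<le> psi" "psi < 2*pi"
  shows "s = r \<and> psi \<le> theta"
proof -
  let ?z = "complex_of_real s * cis psi"
  from assms(1) obtain phi where z: "?z = complex_of_real r * cis phi" and phi: "0 \<le> phi" "phi \<le> theta"
    unfolding sarc_def by auto
  have "s = r"
    using norm_mem_sarc[OF assms(1)] assms(2,4) by (simp add: norm_mult)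
  moreover have "Arg2pi ?z = psi"
    by (rule Arg2pi_unique[of s psi]) (use assms in \<open>auto simp: cis_conv_exp\<close>)
  moreover have "Arg2pi ?z = phi"
    unfolding z by (rule Arg2pi_unique[of r phi]) (use assms phi in \<open>auto simp: cis_conv_exp\<close>)
  ultimately show ?thesis using phi by simp
qed

lemma closed_segment_same_ray:
  assumes "z \<in> closed_segment (complex_of_real s * cis phi) (complex_of_real t * cis phi)" "s \<le> t"
  shows "\<exists>u. z = complex_of_real u * cis phi \<and> s \<le> u \<and> u \<le> t"
proof -
  from assms(1) obtain u where u: "0 \<le> u" "u \<le> 1"
    and z: "z = (1-u) *\<^sub>R (complex_of_real s * cis phi) + u *\<^sub>R (complex_of_real t * cis phi)"
    unfolding closed_segment_def by auto
  have "z = complex_of_real ((1-u) * s + u * t) * cis phi"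
    using z by (simp add: scaleR_conv_of_real algebra_simps)
  moreover have "s \<le> (1-u) * s + u * t" "(1-u) * s + u * t \<le> t"
    using u assms(2) mult_left_mono[of s t u] mult_left_mono[of s t "1-u"] by (auto simp: algebra_simps)
  ultimately show ?thesis by blast
qed

lemma cis_add_pi: "cis (phi + pi) = - cis phi"
  by (simp add: cis_mult[symmetric])

lemma line_of_sightI:
  assumes "p \<in> sarc alpha (r a) (theta a)" "q \<in> sarc alpha (r b) (theta b)" "collinear {0, p, q}"
    "{c\<in>V-{a,b}. closed_segment p q \<inter> sarc alpha (r c) (theta c) \<noteq> {}} \<subseteq> S" "finite S" "card S \<le> k"
  shows "line_of_sight k alpha r theta V a b"
  unfolding line_of_sight_def
  using assms card_mono[OF assms(5,4)] by (intro exI[of _ p] exI[of _ q]) auto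

lemma line_of_sight_sym:
  assumes "line_of_sight k alpha r theta V a b"
  shows "line_of_sight k alpha r theta V b a"
proof -
  obtain p q where pq: "p \<in> sarc alpha (r a) (theta a)" "q \<in> sarc alpha (r b) (theta b)"
    "collinear {0, p, q}"
    "card {c \<in> V - {a, b}. closed_segment p q \<inter> sarc alpha (r c) (theta c) \<noteq> {}} \<le> k"
    using assms unfolding line_of_sight_def by blast
  have "{0, q, p} = {0, p, q}" "V - {b, a} = V - {a, b}"
    by blast+
  then show ?thesis
    unfolding line_of_sight_def
    by (intro exI[of _ q] exI[of _ p]) (use pq in \<open>simp add: closed_segment_commute\<close>)
qed

lemma collinear_0_real_multiples:
  "collinear {0, complex_of_real s * w, complex_of_real t * w}"
proof (cases "s = 0")
  case False
  then have "complex_of_real t * w = (t / s) *\<^sub>R (complex_of_real s * w)"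
    by (simp add: scaleR_conv_of_real)
  then show ?thesis
    unfolding collinear_lemma by blast
qed (simp add: collinear_lemma)

lemma line_of_sight_along_ray:
  assumes V: "finite V" "\<forall>v\<in>V. 0 < r v" and "a \<in> V"
    and ab: "r a \<le> r b" and phi: "0 \<le> phi" "phi \<le> theta a" "phi \<le> theta b"
    and few: "card {c\<in>V-{a,b}. r a \<le> r c \<and> r c \<le> r b} \<le> k"
  shows "line_of_sight k 0 r theta V a b"
proof (rule line_of_sightI)
  let ?p = "complex_of_real (r a) * cis phi" and ?q = "complex_of_real (r b) * cis phi"
  show "?p \<in> sarc 0 (r a) (theta a)" "?q \<in> sarc 0 (r b) (theta b)"
    using phi by (auto intro: cis_mem_sarc)
  show "collinear {0, ?p, ?q}"
    by (rule collinear_0_real_multiples)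
  show "{c\<in>V-{a,b}. closed_segment ?p ?q \<inter> sarc 0 (r c) (theta c) \<noteq> {}}
      \<subseteq> {c\<in>V-{a,b}. r a \<le> r c \<and> r c \<le> r b}"
  proof (rule subsetI)
    fix c assume "c \<in> {c\<in>V-{a,b}. closed_segment ?p ?q \<inter> sarc 0 (r c) (theta c) \<noteq> {}}"
    then obtain z where c: "c \<in> V-{a,b}"
      and z: "z \<in> closed_segment ?p ?q" "z \<in> sarc 0 (r c) (theta c)" by blast
    obtain u where u: "z = complex_of_real u * cis phi" "r a \<le> u" "u \<le> r b"
      using closed_segment_same_ray[OF z(1) ab] by blast
    have "0 < u"
      using V(2) \<open>a \<in> V\<close> u(2) by fastforce
    moreover have "0 < r c"
      using V(2) c(1) by blast
    ultimately have "u = r c"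
      using norm_mem_sarc[OF z(2)] u(1) by (simp add: norm_mult)
    with u c show "c \<in> {c\<in>V-{a,b}. r a \<le> r c \<and> r c \<le> r b}" by simp
  qed
qed (use V few in auto)

lemma line_of_sight_through_centre:
  assumes V: "finite V" "\<forall>v\<in>V. 0 < r v \<and> theta v < 2*pi" "a \<in> V" "b \<in> V"
    and phi: "0 \<le> phi" "phi \<le> theta a" "phi + pi \<le> theta b"
    and few: "card {c\<in>V-{a,b}. (r c \<le> r a \<and> phi \<le> theta c) \<or> (r c \<le> r b \<and> phi + pi \<le> theta c)} \<le> k"
  shows "line_of_sight k 0 r theta V a b"
proof (rule line_of_sightI)
  let ?p = "complex_of_real (r a) * cis phi" and ?q = "complex_of_real (r b) * cis (phi + pi)"
  have q: "?q = complex_of_real (- r b) * cis phi"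
    by (simp add: cis_add_pi)
  have "phi + pi < 2*pi"
    using V(2,4) phi(3) by fastforce
  show "?p \<in> sarc 0 (r a) (theta a)" "?q \<in> sarc 0 (r b) (theta b)"
    using phi by (auto intro: cis_mem_sarc)
  show "collinear {0, ?p, ?q}"
    unfolding q by (rule collinear_0_real_multiples)
  show "{c\<in>V-{a,b}. closed_segment ?p ?q \<inter> sarc 0 (r c) (theta c) \<noteq> {}}
      \<subseteq> {c\<in>V-{a,b}. (r c \<le> r a \<and> phi \<le> theta c) \<or> (r c \<le> r b \<and> phi + pi \<le> theta c)}"
  proof (rule subsetI)
    fix c assume "c \<in> {c\<in>V-{a,b}. closed_segment ?p ?q \<inter> sarc 0 (r c) (theta c) \<noteq> {}}"
    then obtain z where c: "c \<in> V-{a,b}"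
      and z: "z \<in> closed_segment ?q ?p" "z \<in> sarc 0 (r c) (theta c)"
      by (auto simp: closed_segment_commute)
    have rc: "0 < r c" "theta c < 2*pi" "0 < r a" "0 < r b"
      using V(2-4) c by auto
    obtain u where u: "z = complex_of_real u * cis phi" "- r b \<le> u" "u \<le> r a"
      using closed_segment_same_ray[OF z(1)[unfolded q]] rc by auto
    consider "0 < u" | "u < 0" | "u = 0" by linarith
    then show "c \<in> {c\<in>V-{a,b}. (r c \<le> r a \<and> phi \<le> theta c) \<or> (r c \<le> r b \<and> phi + pi \<le> theta c)}"
    proof cases
      case 1
      then show ?thesis
        using polar_mem_sarc[OF z(2)[unfolded u(1)] rc(1,2)] \<open>phi + pi < 2*pi\<close> phi(1) u c by auto
    next
      case 2
      have "z = complex_of_real (- u) * cis (phi + pi)"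
        using u(1) by (simp add: cis_add_pi)
      with z(2) have "- u = r c \<and> phi + pi \<le> theta c"
        using polar_mem_sarc[of "- u" "phi + pi"] rc(1,2) \<open>phi + pi < 2*pi\<close> phi(1) 2 by simp
      then show ?thesis
        using u c by auto
    next
      case 3
      then show ?thesis
        using norm_mem_sarc[OF z(2)] u(1) rc(1) by simp
    qed
  qed
qed (use V few in auto)

definition half_turn :: "nat \<Rightarrow> nat" where
  "half_turn k = 8 * (k + 2)"

text \<open>Extents are measured in units of pi / half_turn k.\<close>

definition sweep :: "nat \<Rightarrow> nat \<Rightarrow> nat" where
  "sweep k v =
     (if v < k + 2 then 2 * (k + 2) + 2 * v
      else if v < 2 * k + 3 then half_turn k + 2 * (v - (k + 2))
      else 10 * (k + 2) + 2 * (v - (2 * k + 3)) + 1)"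

lemma half_turn_eq: "half_turn k = 8 * k + 16"
  by (simp add: half_turn_def)

lemma strict_mono_sweep: "strict_mono (sweep k)"
  unfolding strict_mono_def sweep_def half_turn_def by auto

lemma sweep_bounds: "v < 3 * k + 4 \<Longrightarrow> 0 < sweep k v \<and> sweep k v < 2 * half_turn k"
  unfolding sweep_def half_turn_def by auto

lemma sweep_cases:
  "c < k + 2 \<and> sweep k c = 2 * k + 4 + 2 * c
   \<or> k + 2 \<le> c \<and> c < 2 * k + 3 \<and> sweep k c + 2 * k + 4 = 8 * k + 16 + 2 * c
   \<or> 2 * k + 3 \<le> c \<and> sweep k c + 4 * k + 6 = 10 * k + 21 + 2 * c"
  unfolding sweep_def half_turn_def by auto

text \<open>The arcs met by the diameter from angle pi * m / half_turn k on arc a to the opposite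
  angle on arc b, for a < b (cf. line_of_sight_through_centre).\<close>

definition centre_blockers :: "nat \<Rightarrow> nat \<Rightarrow> nat \<Rightarrow> nat \<Rightarrow> nat set" where
  "centre_blockers k a b m = {c\<in>{0..<3 * k + 4}-{a,b}.
     (c \<le> a \<and> m \<le> sweep k c) \<or> (c \<le> b \<and> m + half_turn k \<le> sweep k c)}"

text \<open>The hypothesis repeats sweep_cases for c, so that each instance is a problem of linear
  arithmetic.\<close>

lemma centre_blockers_subset:
  assumes "\<And>c. c < 3 * k + 4 \<Longrightarrow> c < a \<or> a < c \<Longrightarrow> c < b \<or> b < c \<Longrightarrow>
      (c \<le> a \<and> m \<le> sweep k c) \<or> (c \<le> b \<and> m + 8 * k + 16 \<le> sweep k c) \<Longrightarrow>
      c < k + 2 \<and> sweep k c = 2 * k + 4 + 2 * c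
      \<or> k + 2 \<le> c \<and> c < 2 * k + 3 \<and> sweep k c + 2 * k + 4 = 8 * k + 16 + 2 * c
      \<or> 2 * k + 3 \<le> c \<and> sweep k c + 4 * k + 6 = 10 * k + 21 + 2 * c \<Longrightarrow>
      lo \<le> c \<and> c < hi"
  shows "centre_blockers k a b m \<subseteq> {lo..<hi}"
  using assms sweep_cases unfolding centre_blockers_def half_turn_eq by (auto simp: nat_neq_iff)

text \<open>The diameter is turned as far counterclockwise as both arcs allow.\<close>

lemma card_centre_blockers_far:
  assumes "a + k + 1 < b" "b < 3 * k + 4"
  shows "card (centre_blockers k a b (min (sweep k a) (sweep k b - half_turn k))) \<le> k"
proof -
  define m where "m = min (sweep k a) (sweep k b - half_turn k)"
  have m_cases: "m = sweep k a \<and> sweep k a \<le> sweep k b - half_turn k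
      \<or> m = sweep k b - half_turn k \<and> sweep k b - half_turn k \<le> sweep k a"
    unfolding m_def by linarith
  consider (middle) "b < 2 * k + 3" | (late) "2 * k + 3 \<le> b" "a + 2 * k + 3 \<le> b"
    | (early) "2 * k + 3 \<le> b" "b < a + 2 * k + 3"
    by linarith
  then obtain lo hi where blockers: "centre_blockers k a b m \<subseteq> {lo..<hi}" and "hi \<le> lo + k"
  proof cases
    case middle
    then have "m + 2 * k + 4 = 2 * b"
      using m_cases sweep_cases[of a k] sweep_cases[of b k] assms unfolding half_turn_eq by linarith
    then have "centre_blockers k a b m \<subseteq> {0..<a}"
      by (intro centre_blockers_subset) (use middle assms in \<open>elim disjE conjE; linarith\<close>)
    then show ?thesis
      by (rule that) (use middle assms in linarith)
  next
    case late
    then have "m = 2 * k + 4 + 2 * a"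
      using m_cases sweep_cases[of a k] sweep_cases[of b k] assms unfolding half_turn_eq by linarith
    then have "centre_blockers k a b m \<subseteq> {a + 2 * k + 3..<b}"
      by (intro centre_blockers_subset) (use late assms in \<open>elim disjE conjE; linarith\<close>)
    then show ?thesis
      by (rule that) (use late assms in linarith)
  next
    case early
    then have "m + 2 * k + 1 = 2 * b"
      using m_cases sweep_cases[of a k] sweep_cases[of b k] assms unfolding half_turn_eq by linarith
    then have "centre_blockers k a b m \<subseteq> {b - (2 * k + 2)..<a}"
      by (intro centre_blockers_subset) (use early assms in \<open>elim disjE conjE; linarith\<close>)
    then show ?thesis
      by (rule that) (use early assms in linarith)
  qed
  have "card (centre_blockers k a b m) \<le> card {lo..<hi}"
    using blockers by (intro card_mono) auto
  with \<open>hi \<le> lo + k\<close> show ?thesis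
    unfolding m_def by simp
qed

definition radius :: "nat \<Rightarrow> real" where
  "radius v = real v + 1"

definition extent :: "nat \<Rightarrow> nat \<Rightarrow> real" where
  "extent k v = pi * real (sweep k v) / real (half_turn k)"

lemma angle_le_extent_iff: "pi * real m / real (half_turn k) \<le> extent k v \<longleftrightarrow> m \<le> sweep k v"
proof -
  have "0 < real (half_turn k)"
    by (simp add: half_turn_def)
  then show ?thesis
    unfolding extent_def by (simp add: divide_le_cancel mult_le_cancel_left_pos)
qed

lemma angle_add_pi: "pi * real m / real (half_turn k) + pi = pi * real (m + half_turn k) / real (half_turn k)"
proof -
  have "0 < real (half_turn k)"
    by (simp add: half_turn_def)
  then show ?thesis
    by (simp add: field_simps)
qed

lemma extent_bounds:
  assumes "v < 3 * k + 4"
  shows "0 < extent k v \<and> extent k v < 2 * pi"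
proof -
  have "0 < real (half_turn k)"
    by (simp add: half_turn_def)
  moreover have "0 < real (sweep k v)" "real (sweep k v) < 2 * real (half_turn k)"
    using sweep_bounds[OF assms] by auto
  ultimately show ?thesis
    unfolding extent_def by (auto simp: field_simps)
qed

lemma extent_mono:
  assumes "c \<le> d"
  shows "extent k c \<le> extent k d"
proof -
  have "sweep k c \<le> sweep k d"
    using strict_mono_less_eq[OF strict_mono_sweep] assms by blast
  moreover have "extent k c = pi * real (sweep k c) / real (half_turn k)"
    by (simp add: extent_def)
  ultimately show ?thesis
    using angle_le_extent_iff by presburger
qed

lemma line_of_sight_near:
  assumes "a < b" "b < 3 * k + 4" "b \<le> a + k + 1"
  shows "line_of_sight k 0 radius (extent k) {0..<3 * k + 4} a b"
proof (rule line_of_sight_along_ray)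
  show "0 \<le> extent k a"
    using extent_bounds[of a k] assms by simp
  show "extent k a \<le> extent k b"
    using extent_mono assms(1) by simp
  have "{c\<in>{0..<3 * k + 4}-{a,b}. radius a \<le> radius c \<and> radius c \<le> radius b} \<subseteq> {a<..<b}"
    by (auto simp: radius_def)
  then have "card {c\<in>{0..<3 * k + 4}-{a,b}. radius a \<le> radius c \<and> radius c \<le> radius b} \<le> card {a<..<b}"
    by (intro card_mono) auto
  then show "card {c\<in>{0..<3 * k + 4}-{a,b}. radius a \<le> radius c \<and> radius c \<le> radius b} \<le> k"
    using assms(3) by simp
qed (use assms in \<open>auto simp: radius_def\<close>)

lemma line_of_sight_far:
  assumes "a + k + 1 < b" "b < 3 * k + 4"
  shows "line_of_sight k 0 radius (extent k) {0..<3 * k + 4} a b"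
proof (rule line_of_sight_through_centre)
  define m where "m = min (sweep k a) (sweep k b - half_turn k)"
  let ?phi = "pi * real m / real (half_turn k)"
  have "m + half_turn k \<le> sweep k b"
    using sweep_cases[of b k] assms unfolding m_def half_turn_eq by linarith
  then show "0 \<le> ?phi" "?phi \<le> extent k a" "?phi + pi \<le> extent k b"
    unfolding angle_add_pi angle_le_extent_iff m_def by simp_all
  have "{c\<in>{0..<3 * k + 4}-{a,b}. (radius c \<le> radius a \<and> ?phi \<le> extent k c)
      \<or> (radius c \<le> radius b \<and> ?phi + pi \<le> extent k c)} = centre_blockers k a b m"
    unfolding centre_blockers_def angle_add_pi angle_le_extent_iff by (auto simp: radius_def)
  then show "card {c\<in>{0..<3 * k + 4}-{a,b}. (radius c \<le> radius a \<and> ?phi \<le> extent k c)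
      \<or> (radius c \<le> radius b \<and> ?phi + pi \<le> extent k c)} \<le> k"
    using card_centre_blockers_far[OF assms] unfolding m_def by simp
qed (use assms extent_bounds in \<open>auto simp: radius_def\<close>)

lemma line_of_sight_construction:
  assumes "a < b" "b < 3 * k + 4"
  shows "line_of_sight k 0 radius (extent k) {0..<3 * k + 4} a b"
  using line_of_sight_near line_of_sight_far assms by (cases "b \<le> a + k + 1") auto

theorem mainTheorem7:
  fixes k :: nat
  shows "semi_arc_k_visibility_graph k {0..<3*k+4} (\<lambda>a b. a \<noteq> (b::nat))"
  unfolding semi_arc_k_visibility_graph_def
proof (intro exI conjI)
  let ?V = "{0..<3*k+4}"
  have "\<forall>v\<in>?V. 0 < radius v \<and> 0 < extent k v \<and> extent k v < 2 * pi"
    using extent_bounds by (auto simp: radius_def)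
  moreover have "\<forall>u\<in>?V. \<forall>v\<in>?V. u \<noteq> v \<longrightarrow> sarc 0 (radius u) (extent k u) \<inter> sarc 0 (radius v) (extent k v) = {}"
    by (intro ballI impI sarc_disjoint_radii) (auto simp: radius_def)
  ultimately show "semi_arc_rep 0 radius (extent k) ?V"
    unfolding semi_arc_rep_def by simp
  show "\<forall>a\<in>?V. \<forall>b\<in>?V. a \<noteq> b \<longrightarrow> (a \<noteq> b) = line_of_sight k 0 radius (extent k) ?V a b"
  proof (intro ballI impI)
    fix a b assume "a \<in> ?V" "b \<in> ?V" "a \<noteq> b"
    then consider "a < b" "b < 3 * k + 4" | "b < a" "a < 3 * k + 4"
      by fastforce
    then have "line_of_sight k 0 radius (extent k) ?V a b"
      by cases (auto intro: line_of_sight_construction line_of_sight_sym)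
    with \<open>a \<noteq> b\<close> show "(a \<noteq> b) = line_of_sight k 0 radius (extent k) ?V a b"
      by simp
  qed
qed

end
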